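(* Let $n\ge3$ and let $S=(s_{ij})$ be an $n\times n$ magic square, with $x_{ij}=j-\frac{n-1}{2}$, $y_{ij}=\frac{n-1}{2}-i$, $z_{ij}=s_{ij}-\frac{n^2+1}{2}$. Then the covariance matrix of $(X,Y,Z)$ has the form \[ \Sigma=\begin{pmatrix}\mathrm{Var}(X)&\mathrm{Cov}(X,Y)&0\\ \mathrm{Cov}(X,Y)&\mathrm{Var}(Y)&0\\ 0&0&\mathrm{Var}(Z)\end{pmatrix}; \] in particular $Z$ is uncorrelated with both $X$ and $Y$.
   Context: A magic square of order $n$ is an arrangement of $1,\dots,n^2$ (each used once) in an $n\times n$ grid such that every row, every column, and both main diagonals sum to $n(n^2+1)/2$. $X,Y,Z$ are the functions $(i,j)\mapsto x_{ij},y_{ij},z_{ij}$ regarded as random variables under the uniform distribution on the $n^2$ cells; $\mathrm{Var}$ and $\mathrm{Cov}$ are the corresponding population variance and covariance (normalized by $1/n^2$). *)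

theory Defs
  imports Main "HOL.Real"
begin

text \<open>Cells of an n x n grid, indexed 0-based: (i,j) with i the row, j the column.\<close>
definition cells :: "nat \<Rightarrow> (nat \<times> nat) set" where
  "cells n = {0..<n} \<times> {0..<n}"

definition magic_square :: "nat \<Rightarrow> (nat \<Rightarrow> nat \<Rightarrow> nat) \<Rightarrow> bool" where
  "magic_square n s \<longleftrightarrow>
     bij_betw (\<lambda>(i,j). s i j) (cells n) {1..n^2} \<and>
     (\<forall>i<n. real (\<Sum>j<n. s i j) = real n * (real n ^ 2 + 1) / 2) \<and>
     (\<forall>j<n. real (\<Sum>i<n. s i j) = real n * (real n ^ 2 + 1) / 2) \<and>
     real (\<Sum>i<n. s i i) = real n * (real n ^ 2 + 1) / 2 \<and>
     real (\<Sum>i<n. s i (n - 1 - i)) = real n * (real n ^ 2 + 1) / 2"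

text \<open>Population mean / covariance / variance under the uniform distribution on the cells.\<close>
definition mean :: "nat \<Rightarrow> (nat \<times> nat \<Rightarrow> real) \<Rightarrow> real" where
  "mean n X = (\<Sum>c\<in>cells n. X c) / real (n^2)"

definition cov :: "nat \<Rightarrow> (nat \<times> nat \<Rightarrow> real) \<Rightarrow> (nat \<times> nat \<Rightarrow> real) \<Rightarrow> real" where
  "cov n X Y = (\<Sum>c\<in>cells n. (X c - mean n X) * (Y c - mean n Y)) / real (n^2)"

definition var :: "nat \<Rightarrow> (nat \<times> nat \<Rightarrow> real) \<Rightarrow> real" where
  "var n X = cov n X X"

definition cov_matrix3 :: "nat \<Rightarrow> (nat \<times> nat \<Rightarrow> real) \<Rightarrow> (nat \<times> nat \<Rightarrow> real)
    \<Rightarrow> (nat \<times> nat \<Rightarrow> real) \<Rightarrow> real list list" where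
  "cov_matrix3 n X Y Z =
     [[cov n X X, cov n X Y, cov n X Z],
      [cov n Y X, cov n Y Y, cov n Y Z],
      [cov n Z X, cov n Z Y, cov n Z Z]]"

end

theory Submission
  imports Defs
begin

text \<open>The centred entries Z of a magic square have zero row and column sums, while X is a
  function of the column alone and Y of the row alone. Hence Z is orthogonal to every
  function of the column index and to every function of the row index, and in particular
  it has mean 0 and zero covariance with X and Y.\<close>

lemma cov_commute: "cov n X Y = cov n Y X"
  unfolding cov_def by (simp add: mult.commute)

lemma sum_cells: "(\<Sum>c\<in>cells n. g c) = (\<Sum>i<n. \<Sum>j<n. g (i,j))"
  unfolding cells_def lessThan_atLeast0 by (simp add: sum.cartesian_product)

lemma sum_cells_column_weighted_eq_0:
  assumes "\<And>j. j < n \<Longrightarrow> (\<Sum>i<n. Z (i,j)) = 0"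
  shows "(\<Sum>c\<in>cells n. h (snd c) * Z c) = (0::real)"
proof -
  have "(\<Sum>c\<in>cells n. h (snd c) * Z c) = (\<Sum>j<n. h j * (\<Sum>i<n. Z (i,j)))"
    unfolding sum_cells by (subst sum.swap) (simp add: sum_distrib_left)
  also have "\<dots> = 0"
    using assms by simp
  finally show ?thesis .
qed

lemma sum_cells_row_weighted_eq_0:
  assumes "\<And>i. i < n \<Longrightarrow> (\<Sum>j<n. Z (i,j)) = 0"
  shows "(\<Sum>c\<in>cells n. h (fst c) * Z c) = (0::real)"
proof -
  have "(\<Sum>c\<in>cells n. h (fst c) * Z c) = (\<Sum>i<n. h i * (\<Sum>j<n. Z (i,j)))"
    by (simp add: sum_cells sum_distrib_left)
  also have "\<dots> = 0"
    using assms by simp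
  finally show ?thesis .
qed

lemma cov_eq_0_if_orthogonal_to_functions_of:
  assumes orth: "\<And>h. (\<Sum>c\<in>cells n. h (p c) * Z c) = 0"
    and X_factors: "\<And>c. X c = f (p c)"
  shows "cov n X Z = 0"
proof -
  have mean_Z: "mean n Z = 0"
    using orth[of "\<lambda>_. 1"] unfolding mean_def by simp
  have "(\<Sum>c\<in>cells n. (X c - mean n X) * (Z c - mean n Z))
      = (\<Sum>c\<in>cells n. (f (p c) - mean n X) * Z c)"
    by (simp add: mean_Z X_factors)
  also have "\<dots> = 0"
    by (rule orth)
  finally show ?thesis
    unfolding cov_def by simp
qed

lemma magic_square_centred_column_sum:
  assumes "magic_square n s" and "j < n"
  shows "(\<Sum>i<n. real (s i j) - (real n ^ 2 + 1) / 2) = 0"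
  using assms unfolding magic_square_def by (simp add: sum_subtractf)

lemma magic_square_centred_row_sum:
  assumes "magic_square n s" and "i < n"
  shows "(\<Sum>j<n. real (s i j) - (real n ^ 2 + 1) / 2) = 0"
  using assms unfolding magic_square_def by (simp add: sum_subtractf)

theorem mainTheorem3:
  fixes n :: nat and s :: "nat \<Rightarrow> nat \<Rightarrow> nat"
    and X Y Z :: "nat \<times> nat \<Rightarrow> real"
  assumes "n \<ge> 3"
    and "magic_square n s"
    and "X = (\<lambda>(i,j). real j - (real n - 1) / 2)"
    and "Y = (\<lambda>(i,j). (real n - 1) / 2 - real i)"
    and "Z = (\<lambda>(i,j). real (s i j) - (real n ^ 2 + 1) / 2)"
  shows "cov_matrix3 n X Y Z =
           [[var n X, cov n X Y, 0],
            [cov n X Y, var n Y, 0],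
            [0, 0, var n Z]]"
proof -
  have "cov n X Z = 0"
  proof (rule cov_eq_0_if_orthogonal_to_functions_of
      [where p = snd and f = "\<lambda>j. real j - (real n - 1) / 2"])
    show "(\<Sum>c\<in>cells n. h (snd c) * Z c) = 0" for h
      by (rule sum_cells_column_weighted_eq_0)
        (simp add: assms(5) magic_square_centred_column_sum[OF assms(2)])
  qed (simp add: assms(3) split: prod.split)
  moreover have "cov n Y Z = 0"
  proof (rule cov_eq_0_if_orthogonal_to_functions_of
      [where p = fst and f = "\<lambda>i. (real n - 1) / 2 - real i"])
    show "(\<Sum>c\<in>cells n. h (fst c) * Z c) = 0" for h
      by (rule sum_cells_row_weighted_eq_0)
        (simp add: assms(5) magic_square_centred_row_sum[OF assms(2)])
  qed (simp add: assms(4) split: prod.split)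
  ultimately show ?thesis
    unfolding cov_matrix3_def var_def
    using cov_commute[of n X Y] cov_commute[of n X Z] cov_commute[of n Y Z] by simp
qed

end
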